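(* Let $p$ be a probability density on $\mathbb{R}^d$, $\tau>0$, $y\in\mathbb{R}^d$, and consider the recursion $x_{k+1}=\alpha_k\,\mathrm{MMSE}_{\sigma_k}(x_k)+(1-\alpha_k)y$ with $\alpha_k=\frac{k+1}{k+2}$ and $\sigma_k^2=\frac{\tau}{k+1}$. Then for every $k\ge0$, $$x_{k+1}=x_k-\gamma_k\nabla F_{\sigma_k}(x_k),\qquad F_{\sigma_k}(x):=\tfrac12\|y-x\|^2-\tau\ln p_{\sigma_k}(x),\qquad \gamma_k=\frac{1}{k+2}.$$
   Context: For $\sigma>0$, $p_\sigma$ denotes the density of $X+\sigma\varepsilon$ where $X\sim p$ and $\varepsilon\sim\mathcal N(0,I_d)$ are independent; $p_\sigma$ is smooth and positive. $\mathrm{MMSE}_\sigma(z):=\mathbb{E}[X\mid X+\sigma\varepsilon=z]$. *)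

theory Defs
  imports "HOL-Analysis.Analysis"
begin

definition gauss_density :: "real \<Rightarrow> 'a::euclidean_space \<Rightarrow> real" where
  "gauss_density \<sigma> u =
     (2 * pi * \<sigma>\<^sup>2) powr (- real DIM('a) / 2) * exp (- (norm u)\<^sup>2 / (2 * \<sigma>\<^sup>2))"

definition prob_density :: "('a::euclidean_space \<Rightarrow> real) \<Rightarrow> bool" where
  "prob_density p \<longleftrightarrow> p \<in> borel_measurable lborel \<and> (\<forall>x. 0 \<le> p x)
      \<and> integrable lborel p \<and> (\<integral>x. p x \<partial>lborel) = 1"

text \<open>p_sigma: density of X + sigma*eps, X ~ p, eps ~ N(0,I) independent (convolution).\<close>
definition smoothed_density :: "('a::euclidean_space \<Rightarrow> real) \<Rightarrow> real \<Rightarrow> 'a \<Rightarrow> real" where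
  "smoothed_density p \<sigma> z = (\<integral>x. p x * gauss_density \<sigma> (z - x) \<partial>lborel)"

text \<open>MMSE_sigma(z) = E[X | X + sigma*eps = z], given pointwise by Bayes' formula
  (the posterior density of X given X + sigma*eps = z is p(x) phi_sigma(z-x) / p_sigma(z)).\<close>
definition MMSE :: "('a::euclidean_space \<Rightarrow> real) \<Rightarrow> real \<Rightarrow> 'a \<Rightarrow> 'a" where
  "MMSE p \<sigma> z = (\<integral>x. (p x * gauss_density \<sigma> (z - x) / smoothed_density p \<sigma> z) *\<^sub>R x \<partial>lborel)"

definition grad :: "('a::euclidean_space \<Rightarrow> real) \<Rightarrow> 'a \<Rightarrow> 'a" where
  "grad f x = (THE g. (f has_derivative (\<lambda>h. g \<bullet> h)) (at x))"

end

theory Submission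
  imports Defs
begin

text \<open>Differentiating under the integral sign, which is justified by a uniform second-order
  Taylor bound on the Gaussian kernel, gives Tweedie's formula
  \<open>\<nabla> ln p\<^sub>\<sigma>(z) = (MMSE\<^sub>\<sigma>(z) - z) / \<sigma>\<^sup>2\<close>. Hence
  \<open>\<nabla>F\<^sub>\<sigma>(x) = (x - y) - (\<tau> / \<sigma>\<^sup>2) (MMSE\<^sub>\<sigma>(x) - x)\<close>, and since
  \<open>\<tau> / \<sigma>\<^sub>k\<^sup>2 = k + 1\<close>, the gradient step with \<open>\<gamma>\<^sub>k = 1 / (k + 2)\<close> is exactly the convex
  combination \<open>\<alpha>\<^sub>k MMSE\<^sub>\<sigma>\<^sub>k(x\<^sub>k) + (1 - \<alpha>\<^sub>k) y\<close>.\<close>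

lemma mult_exp_neg_le_one:
  fixes u :: real
  assumes "0 \<le> u"
  shows "u * exp (- u) \<le> 1"
proof -
  have "u \<le> exp u"
    using exp_ge_add_one_self[of u] by linarith
  then show ?thesis
    by (simp add: exp_minus field_simps)
qed

lemma exp_neg_norm_sq_second_derivative_bound:
  fixes v h :: "'a::real_inner" and \<beta> :: real
  assumes "0 < \<beta>"
  shows "\<bar>(4 * \<beta>\<^sup>2 * (v \<bullet> h)\<^sup>2 - 2 * \<beta> * (norm h)\<^sup>2) * exp (- \<beta> * (norm v)\<^sup>2)\<bar>
           \<le> 6 * \<beta> * (norm h)\<^sup>2"
proof -
  define e where "e = exp (- \<beta> * (norm v)\<^sup>2)"
  have e: "0 < e" "e \<le> 1"
    using assms by (auto simp: e_def)
  have "(v \<bullet> h)\<^sup>2 \<le> (norm v)\<^sup>2 * (norm h)\<^sup>2"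
    by (metis Cauchy_Schwarz_ineq2 abs_ge_zero power2_abs power_mono power_mult_distrib)
  then have "4 * \<beta>\<^sup>2 * (v \<bullet> h)\<^sup>2 * e \<le> 4 * \<beta>\<^sup>2 * ((norm v)\<^sup>2 * (norm h)\<^sup>2) * e"
    using e by (intro mult_right_mono mult_left_mono) auto
  also have "\<dots> = 4 * \<beta> * (norm h)\<^sup>2 * (\<beta> * (norm v)\<^sup>2 * e)"
    by (simp add: power2_eq_square)
  also have "\<dots> \<le> 4 * \<beta> * (norm h)\<^sup>2"
    using mult_exp_neg_le_one[of "\<beta> * (norm v)\<^sup>2"] assms
    by (intro mult_left_le) (auto simp: e_def)
  finally have "4 * \<beta>\<^sup>2 * (v \<bullet> h)\<^sup>2 * e \<le> 4 * \<beta> * (norm h)\<^sup>2" .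
  moreover have "2 * \<beta> * (norm h)\<^sup>2 * e \<le> 2 * \<beta> * (norm h)\<^sup>2"
    using e assms by (intro mult_left_le) auto
  moreover have "0 \<le> 4 * \<beta>\<^sup>2 * (v \<bullet> h)\<^sup>2 * e" "0 \<le> 2 * \<beta> * (norm h)\<^sup>2 * e"
    using e assms by auto
  ultimately show ?thesis
    unfolding e_def[symmetric] left_diff_distrib abs_le_iff by linarith
qed

lemma exp_neg_norm_sq_taylor_bound:
  fixes w h :: "'a::real_inner" and \<beta> :: real
  assumes "0 < \<beta>"
  shows "\<bar>exp (- \<beta> * (norm (w + h))\<^sup>2) - exp (- \<beta> * (norm w)\<^sup>2)
            + 2 * \<beta> * exp (- \<beta> * (norm w)\<^sup>2) * (w \<bullet> h)\<bar> \<le> 3 * \<beta> * (norm h)\<^sup>2"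
proof -
  define B where "B = w \<bullet> h"
  define D where "D = (norm h)\<^sup>2"
  have norm_line: "(norm (w + t *\<^sub>R h))\<^sup>2 = (norm w)\<^sup>2 + 2 * t * B + t\<^sup>2 * D" for t
    unfolding power2_norm_eq_inner B_def D_def
    by (simp add: inner_commute power2_eq_square algebra_simps)
  define g where "g t = exp (- \<beta> * ((norm w)\<^sup>2 + 2 * t * B + t\<^sup>2 * D))" for t
  define g' where "g' t = - 2 * \<beta> * (B + t * D) * g t" for t
  define g'' where "g'' t = (4 * \<beta>\<^sup>2 * (B + t * D)\<^sup>2 - 2 * \<beta> * D) * g t" for t
  have "DERIV g t :> g' t" for t
    unfolding g_def g'_def by (auto intro!: derivative_eq_intros simp: algebra_simps power2_eq_square)
  moreover have "DERIV g' t :> g'' t" for t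
    unfolding g'_def g''_def g_def by (auto intro!: derivative_eq_intros simp: algebra_simps power2_eq_square)
  ultimately obtain t where "g 1 = g 0 + g' 0 + g'' t / 2"
    using Maclaurin[of 1 2 "\<lambda>m. if m = 0 then g else if m = 1 then g' else g''" g]
    by (force simp: less_2_cases_iff numeral_2_eq_2)
  moreover have "B + t * D = (w + t *\<^sub>R h) \<bullet> h"
    by (simp add: B_def D_def inner_add_left power2_norm_eq_inner)
  then have "g'' t = (4 * \<beta>\<^sup>2 * ((w + t *\<^sub>R h) \<bullet> h)\<^sup>2 - 2 * \<beta> * (norm h)\<^sup>2)
                         * exp (- \<beta> * (norm (w + t *\<^sub>R h))\<^sup>2)"
    by (simp add: g''_def g_def norm_line D_def)
  ultimately have "\<bar>g 1 - g 0 - g' 0\<bar> \<le> 3 * \<beta> * (norm h)\<^sup>2"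
    using exp_neg_norm_sq_second_derivative_bound[OF assms, of "w + t *\<^sub>R h" h] by simp
  then show ?thesis
    using norm_line[of 0] norm_line[of 1] by (simp add: g_def g'_def B_def mult_ac)
qed

lemma borel_measurable_gauss_density [measurable]:
  "gauss_density \<sigma> \<in> borel_measurable borel"
  unfolding gauss_density_def by measurable

lemma gauss_density_eq_center_mult_exp:
  fixes u :: "'a::euclidean_space"
  shows "gauss_density \<sigma> u = gauss_density \<sigma> (0::'a) * exp (- (1 / (2 * \<sigma>\<^sup>2)) * (norm u)\<^sup>2)"
  by (simp add: gauss_density_def)

lemma gauss_density_pos:
  assumes "\<sigma> \<noteq> 0"
  shows "0 < gauss_density \<sigma> u"
  using assms by (simp add: gauss_density_def)

lemma gauss_density_le_center:
  fixes u :: "'a::euclidean_space"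
  shows "gauss_density \<sigma> u \<le> gauss_density \<sigma> (0::'a)"
  by (simp add: gauss_density_def mult_left_le)

lemma norm_mult_gauss_density_le:
  fixes u :: "'a::euclidean_space"
  assumes "\<sigma> \<noteq> 0"
  shows "norm u * gauss_density \<sigma> u \<le> (1 + 2 * \<sigma>\<^sup>2) * gauss_density \<sigma> (0::'a)"
proof -
  define \<beta> where "\<beta> = 1 / (2 * \<sigma>\<^sup>2)"
  define e where "e = exp (- \<beta> * (norm u)\<^sup>2)"
  have "0 < \<beta>" "0 < e" "e \<le> 1"
    using assms by (auto simp: \<beta>_def e_def)
  have "\<beta> * (norm u)\<^sup>2 * e \<le> 1"
    using mult_exp_neg_le_one[of "\<beta> * (norm u)\<^sup>2"] \<open>0 < \<beta>\<close> by (simp add: e_def)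
  then have "(norm u)\<^sup>2 * e \<le> 2 * \<sigma>\<^sup>2"
    using assms by (simp add: \<beta>_def field_simps)
  moreover have "2 * norm u \<le> (norm u)\<^sup>2 + 1"
    using sum_power2_ge_zero[of "norm u - 1" 0] by (simp add: power2_diff)
  then have "norm u \<le> 1 + (norm u)\<^sup>2"
    using norm_ge_zero[of u] by linarith
  then have "norm u * e \<le> e + (norm u)\<^sup>2 * e"
    using mult_right_mono[of "norm u" "1 + (norm u)\<^sup>2" e] \<open>0 < e\<close> by (simp add: distrib_right)
  ultimately have "norm u * e \<le> 1 + 2 * \<sigma>\<^sup>2"
    using \<open>e \<le> 1\<close> by linarith
  then show ?thesis
    using gauss_density_eq_center_mult_exp[of \<sigma> u] gauss_density_pos[OF assms, of "0::'a"]
    by (simp add: e_def \<beta>_def mult.left_commute mult_left_mono)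
qed

lemma gauss_density_taylor_bound:
  fixes w h :: "'a::euclidean_space"
  assumes "\<sigma> \<noteq> 0"
  shows "\<bar>gauss_density \<sigma> (w + h) - gauss_density \<sigma> w + gauss_density \<sigma> w / \<sigma>\<^sup>2 * (w \<bullet> h)\<bar>
           \<le> 3 / (2 * \<sigma>\<^sup>2) * gauss_density \<sigma> (0::'a) * (norm h)\<^sup>2"
proof -
  define \<beta> where "\<beta> = 1 / (2 * \<sigma>\<^sup>2)"
  have "0 < \<beta>"
    using assms by (simp add: \<beta>_def)
  have gauss: "gauss_density \<sigma> u = gauss_density \<sigma> (0::'a) * exp (- \<beta> * (norm u)\<^sup>2)" for u :: 'a
    unfolding \<beta>_def by (rule gauss_density_eq_center_mult_exp)
  have "gauss_density \<sigma> w / \<sigma>\<^sup>2 = 2 * \<beta> * gauss_density \<sigma> w"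
    using assms by (simp add: \<beta>_def field_simps)
  have "gauss_density \<sigma> (w + h) - gauss_density \<sigma> w + gauss_density \<sigma> w / \<sigma>\<^sup>2 * (w \<bullet> h)
        = gauss_density \<sigma> (0::'a) * (exp (- \<beta> * (norm (w + h))\<^sup>2) - exp (- \<beta> * (norm w)\<^sup>2)
            + 2 * \<beta> * exp (- \<beta> * (norm w)\<^sup>2) * (w \<bullet> h))"
    unfolding \<open>gauss_density \<sigma> w / \<sigma>\<^sup>2 = 2 * \<beta> * gauss_density \<sigma> w\<close>
    unfolding gauss[of w] gauss[of "w + h"]
    by (simp add: algebra_simps)
  also have "\<bar>\<dots>\<bar> \<le> gauss_density \<sigma> (0::'a) * (3 * \<beta> * (norm h)\<^sup>2)"
    using exp_neg_norm_sq_taylor_bound[OF \<open>0 < \<beta>\<close>, of w h] gauss_density_pos[OF assms, of "0::'a"]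
    by (simp add: abs_mult abs_of_pos mult_left_mono)
  finally show ?thesis
    by (simp add: \<beta>_def mult_ac)
qed

lemma has_derivative_at_quadratic_remainder:
  fixes f :: "'a::real_normed_vector \<Rightarrow> 'b::real_normed_vector"
  assumes "bounded_linear f'"
    and remainder: "\<And>y. norm (f y - f z - f' (y - z)) \<le> C * (norm (y - z))\<^sup>2"
  shows "(f has_derivative f') (at z)"
  unfolding has_derivative_at_alt
proof (intro conjI allI impI assms(1))
  fix e :: real
  assume "0 < e"
  define d where "d = e / (\<bar>C\<bar> + 1)"
  show "\<exists>d>0. \<forall>y. norm (y - z) < d \<longrightarrow> norm (f y - f z - f' (y - z)) \<le> e * norm (y - z)"
  proof (intro exI[of _ d] conjI allI impI)
    show "0 < d"
      using \<open>0 < e\<close> by (simp add: d_def add_nonneg_pos)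
    fix y
    assume "norm (y - z) < d"
    then have "(\<bar>C\<bar> + 1) * norm (y - z) < e"
      by (simp add: d_def field_simps add_nonneg_pos)
    moreover have "C * norm (y - z) \<le> (\<bar>C\<bar> + 1) * norm (y - z)"
      by (intro mult_right_mono) auto
    ultimately have "C * norm (y - z) \<le> e"
      by linarith
    then have "C * (norm (y - z))\<^sup>2 \<le> e * norm (y - z)"
      by (simp add: power2_eq_square mult.assoc[symmetric] mult_right_mono)
    then show "norm (f y - f z - f' (y - z)) \<le> e * norm (y - z)"
      using remainder[of y] by linarith
  qed
qed

lemma integrable_gauss_convolution:
  fixes p :: "'a::euclidean_space \<Rightarrow> real"
  assumes p: "integrable lborel p" and "\<sigma> \<noteq> 0"
  shows "integrable lborel (\<lambda>x. p x * gauss_density \<sigma> (z - x))"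
proof (rule Bochner_Integration.integrable_bound)
  show "integrable lborel (\<lambda>x. p x * gauss_density \<sigma> (0::'a))"
    using p by (rule integrable_mult_left)
  have [measurable]: "p \<in> borel_measurable lborel"
    using p by (rule borel_measurable_integrable)
  show "(\<lambda>x. p x * gauss_density \<sigma> (z - x)) \<in> borel_measurable lborel"
    by measurable
  show "AE x in lborel. norm (p x * gauss_density \<sigma> (z - x)) \<le> norm (p x * gauss_density \<sigma> (0::'a))"
  proof (rule AE_I2)
    fix x
    show "norm (p x * gauss_density \<sigma> (z - x)) \<le> norm (p x * gauss_density \<sigma> (0::'a))"
      using gauss_density_le_center[of \<sigma> "z - x"]
        gauss_density_pos[OF \<open>\<sigma> \<noteq> 0\<close>, of "z - x"]
      by (simp add: abs_mult mult_left_mono)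
  qed
qed

lemma integrable_gauss_convolution_moment:
  fixes p :: "'a::euclidean_space \<Rightarrow> real"
  assumes p: "integrable lborel p" and "\<sigma> \<noteq> 0"
  shows "integrable lborel (\<lambda>x. (p x * gauss_density \<sigma> (z - x)) *\<^sub>R (x - z))"
proof (rule Bochner_Integration.integrable_bound)
  show "integrable lborel (\<lambda>x. (1 + 2 * \<sigma>\<^sup>2) * gauss_density \<sigma> (0::'a) * p x)"
    using p by (rule integrable_mult_right)
  have [measurable]: "p \<in> borel_measurable lborel"
    using p by (rule borel_measurable_integrable)
  show "(\<lambda>x. (p x * gauss_density \<sigma> (z - x)) *\<^sub>R (x - z)) \<in> borel_measurable lborel"
    by measurable
  show "AE x in lborel. norm ((p x * gauss_density \<sigma> (z - x)) *\<^sub>R (x - z))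
          \<le> norm ((1 + 2 * \<sigma>\<^sup>2) * gauss_density \<sigma> (0::'a) * p x)"
  proof (rule AE_I2)
    fix x
    have "norm ((p x * gauss_density \<sigma> (z - x)) *\<^sub>R (x - z))
          = \<bar>p x\<bar> * (norm (z - x) * gauss_density \<sigma> (z - x))"
      using gauss_density_pos[OF \<open>\<sigma> \<noteq> 0\<close>, of "z - x"] by (simp add: abs_mult norm_minus_commute)
    also have "\<dots> \<le> \<bar>p x\<bar> * ((1 + 2 * \<sigma>\<^sup>2) * gauss_density \<sigma> (0::'a))"
      using norm_mult_gauss_density_le[OF \<open>\<sigma> \<noteq> 0\<close>] by (intro mult_left_mono) auto
    also have "\<dots> = norm ((1 + 2 * \<sigma>\<^sup>2) * gauss_density \<sigma> (0::'a) * p x)"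
      using gauss_density_pos[OF \<open>\<sigma> \<noteq> 0\<close>, of "0::'a"] by (simp add: abs_mult)
    finally show "norm ((p x * gauss_density \<sigma> (z - x)) *\<^sub>R (x - z))
          \<le> norm ((1 + 2 * \<sigma>\<^sup>2) * gauss_density \<sigma> (0::'a) * p x)" .
  qed
qed

lemma has_derivative_smoothed_density:
  fixes p :: "'a::euclidean_space \<Rightarrow> real"
  assumes p: "integrable lborel p" and "\<sigma> \<noteq> 0"
  shows "(smoothed_density p \<sigma> has_derivative
           (\<lambda>h. ((1 / \<sigma>\<^sup>2) *\<^sub>R (\<integral>x. (p x * gauss_density \<sigma> (z - x)) *\<^sub>R (x - z) \<partial>lborel)) \<bullet> h))
         (at z)"
proof (rule has_derivative_at_quadratic_remainder)
  define K where "K x = (p x * gauss_density \<sigma> (z - x)) *\<^sub>R (x - z)" for x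
  define C where "C = 3 / (2 * \<sigma>\<^sup>2) * gauss_density \<sigma> (0::'a)"
  show "bounded_linear (\<lambda>h. ((1 / \<sigma>\<^sup>2) *\<^sub>R integral\<^sup>L lborel K) \<bullet> h)"
    by (rule bounded_linear_inner_right)
  fix y
  define h where "h = y - z"
  define R where "R x = p x * gauss_density \<sigma> (y - x) - p x * gauss_density \<sigma> (z - x)
                         - 1 / \<sigma>\<^sup>2 * (K x \<bullet> h)" for x
  have "integrable lborel K"
    unfolding K_def using p \<open>\<sigma> \<noteq> 0\<close> by (rule integrable_gauss_convolution_moment)
  then have moment: "integrable lborel (\<lambda>x. 1 / \<sigma>\<^sup>2 * (K x \<bullet> h))"
    by (intro integrable_mult_right integrable_inner_left)
  have conv: "integrable lborel (\<lambda>x. p x * gauss_density \<sigma> (u - x))" for u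
    using p \<open>\<sigma> \<noteq> 0\<close> by (rule integrable_gauss_convolution)
  have "smoothed_density p \<sigma> y - smoothed_density p \<sigma> z - ((1 / \<sigma>\<^sup>2) *\<^sub>R integral\<^sup>L lborel K) \<bullet> h
        = (\<integral>x. R x \<partial>lborel)"
    unfolding R_def smoothed_density_def using conv moment \<open>integrable lborel K\<close>
    by simp
  also have "norm \<dots> \<le> (\<integral>x. \<bar>p x\<bar> * (C * (norm h)\<^sup>2) \<partial>lborel)"
  proof (rule Bochner_Integration.integral_norm_bound_integral)
    show "integrable lborel R"
      unfolding R_def using conv moment by (intro Bochner_Integration.integrable_diff)
    show "integrable lborel (\<lambda>x. \<bar>p x\<bar> * (C * (norm h)\<^sup>2))"
      using p by (intro integrable_mult_left integrable_abs)
    fix x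
    define w where "w = z - x"
    have shift: "y - x = w + h" "x - z = - w"
      by (simp_all add: w_def h_def)
    have "R x = p x * (gauss_density \<sigma> (w + h) - gauss_density \<sigma> w
                        + gauss_density \<sigma> w / \<sigma>\<^sup>2 * (w \<bullet> h))"
      unfolding R_def K_def w_def[symmetric] shift by (simp add: algebra_simps)
    then have "norm (R x) = \<bar>p x\<bar> * \<bar>gauss_density \<sigma> (w + h) - gauss_density \<sigma> w
                        + gauss_density \<sigma> w / \<sigma>\<^sup>2 * (w \<bullet> h)\<bar>"
      by (simp add: abs_mult)
    also have "\<dots> \<le> \<bar>p x\<bar> * (C * (norm h)\<^sup>2)"
      unfolding C_def by (intro mult_left_mono gauss_density_taylor_bound \<open>\<sigma> \<noteq> 0\<close>) simp
    finally show "norm (R x) \<le> \<bar>p x\<bar> * (C * (norm h)\<^sup>2)" .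
  qed
  also have "\<dots> = (C * (\<integral>x. \<bar>p x\<bar> \<partial>lborel)) * (norm (y - z))\<^sup>2"
    by (simp add: h_def)
  finally show "norm (smoothed_density p \<sigma> y - smoothed_density p \<sigma> z
                  - ((1 / \<sigma>\<^sup>2) *\<^sub>R integral\<^sup>L lborel K) \<bullet> (y - z))
                \<le> (C * (\<integral>x. \<bar>p x\<bar> \<partial>lborel)) * (norm (y - z))\<^sup>2"
    by (simp add: h_def)
qed

lemma smoothed_density_pos:
  assumes "prob_density p" and "\<sigma> \<noteq> 0"
  shows "0 < smoothed_density p \<sigma> z"
proof -
  have p: "integrable lborel p" "\<And>x. 0 \<le> p x" "(\<integral>x. p x \<partial>lborel) = 1"
    using assms(1) by (auto simp: prob_density_def)
  have nonneg: "0 \<le> p x * gauss_density \<sigma> (z - x)" for x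
    using p(2)[of x] gauss_density_pos[OF assms(2), of "z - x"] by simp
  have "smoothed_density p \<sigma> z \<noteq> 0"
  proof
    assume "smoothed_density p \<sigma> z = 0"
    then have "AE x in lborel. p x * gauss_density \<sigma> (z - x) = 0"
      using integral_nonneg_eq_0_iff_AE[OF integrable_gauss_convolution[OF p(1) assms(2)]] nonneg
      by (simp add: smoothed_density_def)
    then have "AE x in lborel. p x = 0"
      by eventually_elim (metis gauss_density_pos[OF assms(2)] less_irrefl mult_eq_0_iff)
    then have "(\<integral>x. p x \<partial>lborel) = 0"
      by (rule integral_eq_zero_AE)
    with p(3) show False
      by simp
  qed
  moreover have "0 \<le> smoothed_density p \<sigma> z"
    unfolding smoothed_density_def using nonneg by (rule Bochner_Integration.integral_nonneg)
  ultimately show ?thesis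
    by simp
qed

lemma MMSE_minus_self_eq:
  fixes p :: "'a::euclidean_space \<Rightarrow> real"
  assumes p: "integrable lborel p" and "\<sigma> \<noteq> 0" and "smoothed_density p \<sigma> z \<noteq> 0"
  shows "MMSE p \<sigma> z - z = (1 / smoothed_density p \<sigma> z)
           *\<^sub>R (\<integral>x. (p x * gauss_density \<sigma> (z - x)) *\<^sub>R (x - z) \<partial>lborel)"
proof -
  define P where "P = smoothed_density p \<sigma> z"
  define w where "w x = p x * gauss_density \<sigma> (z - x)" for x
  have "MMSE p \<sigma> z = (\<integral>x. (1 / P) *\<^sub>R (w x *\<^sub>R (x - z) + w x *\<^sub>R z) \<partial>lborel)"
    unfolding MMSE_def P_def[symmetric] w_def[symmetric]
    by (intro Bochner_Integration.integral_cong) (simp_all add: algebra_simps)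
  also have "\<dots> = (1 / P) *\<^sub>R ((\<integral>x. w x *\<^sub>R (x - z) \<partial>lborel) + P *\<^sub>R z)"
    using integrable_gauss_convolution_moment[OF p \<open>\<sigma> \<noteq> 0\<close>, of z]
      integrable_gauss_convolution[OF p \<open>\<sigma> \<noteq> 0\<close>, of z]
    by (simp add: w_def P_def smoothed_density_def)
  also have "\<dots> = (1 / P) *\<^sub>R (\<integral>x. w x *\<^sub>R (x - z) \<partial>lborel) + z"
    using assms(3) by (simp add: P_def scaleR_add_right)
  finally show ?thesis
    by (simp add: P_def w_def)
qed

lemma has_derivative_ln_smoothed_density:
  fixes p :: "'a::euclidean_space \<Rightarrow> real"
  assumes "prob_density p" and "\<sigma> \<noteq> 0"
  shows "((\<lambda>z. ln (smoothed_density p \<sigma> z)) has_derivative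
           (\<lambda>h. ((1 / \<sigma>\<^sup>2) *\<^sub>R (MMSE p \<sigma> z - z)) \<bullet> h)) (at z)"
proof -
  define P where "P = smoothed_density p \<sigma>"
  define G where "G = (\<integral>x. (p x * gauss_density \<sigma> (z - x)) *\<^sub>R (x - z) \<partial>lborel)"
  have p: "integrable lborel p"
    using assms(1) by (simp add: prob_density_def)
  have "0 < P z"
    unfolding P_def using assms by (rule smoothed_density_pos)
  have "(P has_derivative (\<lambda>h. ((1 / \<sigma>\<^sup>2) *\<^sub>R G) \<bullet> h)) (at z)"
    unfolding P_def G_def using p assms(2) by (rule has_derivative_smoothed_density)
  then have "((\<lambda>z. ln (P z)) has_derivative (\<lambda>h. (1 / P z) * (((1 / \<sigma>\<^sup>2) *\<^sub>R G) \<bullet> h))) (at z)"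
    using \<open>0 < P z\<close> by (auto intro!: derivative_eq_intros simp: field_simps)
  moreover have "MMSE p \<sigma> z - z = (1 / P z) *\<^sub>R G"
    unfolding P_def G_def using p assms(2) \<open>0 < P z\<close>[unfolded P_def]
    by (intro MMSE_minus_self_eq) auto
  ultimately show ?thesis
    by (simp add: P_def mult.commute)
qed

lemma has_derivative_half_sq_dist_minus_ln_smoothed_density:
  fixes p :: "'a::euclidean_space \<Rightarrow> real"
  assumes "prob_density p" and "\<sigma> \<noteq> 0"
  shows "((\<lambda>z. (1/2) * (norm (y - z))\<^sup>2 - \<tau> * ln (smoothed_density p \<sigma> z)) has_derivative
           (\<lambda>h. ((z - y) - (\<tau> / \<sigma>\<^sup>2) *\<^sub>R (MMSE p \<sigma> z - z)) \<bullet> h)) (at z)"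
proof -
  have "((\<lambda>z. (1/2) * (norm (y - z))\<^sup>2) has_derivative (\<lambda>h. (z - y) \<bullet> h)) (at z)"
    unfolding power2_norm_eq_inner
    by (auto intro!: derivative_eq_intros simp: inner_commute algebra_simps)
  from has_derivative_diff[OF this has_derivative_mult_right[OF has_derivative_ln_smoothed_density[OF assms]]]
  show ?thesis
    by (simp add: inner_diff_left)
qed

lemma grad_eqI:
  fixes f :: "'a::euclidean_space \<Rightarrow> real"
  assumes "(f has_derivative (\<lambda>h. g \<bullet> h)) (at z)"
  shows "grad f z = g"
  unfolding grad_def
proof (rule the_equality)
  show "(f has_derivative (\<lambda>h. g \<bullet> h)) (at z)"
    by (rule assms)
  fix g'
  assume "(f has_derivative (\<lambda>h. g' \<bullet> h)) (at z)"
  from has_derivative_unique[OF this assms] have "g' \<bullet> (g' - g) = g \<bullet> (g' - g)"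
    by metis
  then have "(g' - g) \<bullet> (g' - g) = 0"
    by (simp add: inner_diff_left)
  then show "g' = g"
    by simp
qed

lemma convex_combination_eq_gradient_step:
  fixes m y z :: "'a::real_vector" and n :: real
  assumes "n + 2 \<noteq> 0"
  shows "((n + 1) / (n + 2)) *\<^sub>R m + (1 - (n + 1) / (n + 2)) *\<^sub>R y
           = z - (1 / (n + 2)) *\<^sub>R ((z - y) - (n + 1) *\<^sub>R (m - z))"
proof -
  define a where "a = 1 / (n + 2)"
  define b where "b = (n + 1) / (n + 2)"
  have "a = 1 - b" "a * (n + 1) = b"
    using assms by (simp_all add: a_def b_def field_simps)
  have "z - a *\<^sub>R ((z - y) - (n + 1) *\<^sub>R (m - z))
        = z - a *\<^sub>R z + a *\<^sub>R y + (a * (n + 1)) *\<^sub>R m - (a * (n + 1)) *\<^sub>R z"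
    by (simp add: algebra_simps)
  also have "\<dots> = b *\<^sub>R m + (1 - b) *\<^sub>R y"
    unfolding \<open>a * (n + 1) = b\<close> unfolding \<open>a = 1 - b\<close> by (simp add: algebra_simps)
  finally show ?thesis
    by (simp add: a_def b_def)
qed

theorem proposition1:
  fixes p :: "'a::euclidean_space \<Rightarrow> real" and \<tau> :: real and y :: 'a
    and x :: "nat \<Rightarrow> 'a" and \<alpha> \<sigma> \<gamma> :: "nat \<Rightarrow> real"
    and F :: "nat \<Rightarrow> 'a \<Rightarrow> real"
  assumes "prob_density p"
    and "\<tau> > 0"
    and "\<And>k. \<alpha> k = (real k + 1) / (real k + 2)"
    and "\<And>k. \<sigma> k = sqrt (\<tau> / (real k + 1))"
    and "\<And>k. \<gamma> k = 1 / (real k + 2)"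
    and "\<And>k z. F k z = (1/2) * (norm (y - z))\<^sup>2 - \<tau> * ln (smoothed_density p (\<sigma> k) z)"
    and "\<And>k. x (Suc k) = \<alpha> k *\<^sub>R MMSE p (\<sigma> k) (x k) + (1 - \<alpha> k) *\<^sub>R y"
  shows "\<forall>k. (F k has_derivative (\<lambda>h. grad (F k) (x k) \<bullet> h)) (at (x k))
           \<and> x (Suc k) = x k - \<gamma> k *\<^sub>R grad (F k) (x k)"
proof
  fix k
  have "0 < \<tau> / (real k + 1)"
    using assms(2) by simp
  then have \<sigma>: "\<sigma> k \<noteq> 0" "\<tau> / (\<sigma> k)\<^sup>2 = real k + 1"
    using assms(2) by (simp_all add: assms(4))
  have "F k = (\<lambda>z. (1/2) * (norm (y - z))\<^sup>2 - \<tau> * ln (smoothed_density p (\<sigma> k) z))"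
    using assms(6) by blast
  then have dF: "(F k has_derivative
                   (\<lambda>h. ((x k - y) - (real k + 1) *\<^sub>R (MMSE p (\<sigma> k) (x k) - x k)) \<bullet> h)) (at (x k))"
    using has_derivative_half_sq_dist_minus_ln_smoothed_density[OF assms(1) \<sigma>(1), of y \<tau> "x k"]
    by (simp add: \<sigma>(2))
  then have grad: "grad (F k) (x k) = (x k - y) - (real k + 1) *\<^sub>R (MMSE p (\<sigma> k) (x k) - x k)"
    by (rule grad_eqI)
  have "x (Suc k) = x k - \<gamma> k *\<^sub>R grad (F k) (x k)"
    unfolding assms(7) assms(3) assms(5) grad
    by (rule convex_combination_eq_gradient_step) simp
  with dF show "(F k has_derivative (\<lambda>h. grad (F k) (x k) \<bullet> h)) (at (x k))
                  \<and> x (Suc k) = x k - \<gamma> k *\<^sub>R grad (F k) (x k)"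
    by (simp add: grad)
qed

end
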